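(* Given a system with a finitely observable state $\bar{x}_0$, the lower bound $D_\mathcal{O}^l(Y_{\bar{x}_{0:T}})$ on the degree of observability is a concave function with respect to the state sequence $x_{0:T}$ if the output maps are observability-regular.
   Context: Consider the discrete-time LTI system $x_{t+1} = Ax_t + Bu_t$, $y_t = Cx_t + \varepsilon_t$, with $x_t \in \mathcal{X}\subset\mathbb{R}^{n_x}$, $u_t\in\mathcal{U}\subset\mathbb{R}^{n_u}$, where the measurement uncertainty $\varepsilon_t$ is set-valued: the output at state $x$ is the ellipsoid $\mathcal{Y}_x = \{y \mid (y-Cx)^\top [Q(Cx)]^{-1}(y-Cx)\le 1\}$ with $Q(Cx)\succ 0$ state dependent. Let $\Lambda(\mathcal{Y}_x)$ denote the largest eigenvalue of $Q$ (the size of the uncertainty ellipsoid at $x$). Assumption: the map $x\mapsto\Lambda(\mathcal{Y}_x)$ is convex and uniformly bounded on a domain $\mathcal{S}\subset\mathcal{X}$ (or is replaced by a convex upper-bounding envelope). Its local Lipschitz constant is $L(\bar{x}) = 2M(\bar{x},r)/r$ with $M(\bar{x},r)=\max_{x\in B_r(\bar{x})}\Lambda(x)$, and $L$ is asserted to be convex in $\bar{x}$. The set distance is $d_s(\mathcal{A},\mathcal{B})=\inf\{\lVert v-w\rVert : v\in\mathcal{A}, w\in\mathcal{B}\}$, and for output tubes $Y_{x_{0:T}}=\{\mathcal{Y}_{x_0},\dots,\mathcal{Y}_{x_T}\}$ generated from initial state $x_0$ under input sequence $u_{0:T-1}$, the tube distance is $d_\Gamma(Y_{\bar{x}_{0:T}},Y_{x_{0:T}})=\sum_{t=0}^T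 d_s(\mathcal{Y}_{\bar{x}_t},\mathcal{Y}_{x_t})$. The system is finite horizon weakly observable at $\bar{x}_0$ if, for some $T>0$, for all $x_0$ in a neighborhood of $\bar{x}_0$ and all input sequences, $d_\Gamma(Y_{\bar{x}_{0:T}},Y_{x_{0:T}})>0$ exactly when $d(\bar{x}_0,x_0)>0$. The system is observability-regular if the convexity/boundedness assumption on $\Lambda$ holds and the system is finite horizon weakly observable. The degree of observability is $D_\mathcal{O}(Y_{\bar{x}_{0:T}})=\inf_{x_0:\lVert x_0-\bar{x}_0\rVert>\epsilon}\sum_{t=0}^T d_s(\mathcal{Y}_{\bar{x}_t},\mathcal{Y}_{x_t})$ (same inputs), and its lower bound is $D_\mathcal{O}^l(Y_{\bar{x}_{0:T}})=\sum_{t=0}^T\{\sigma_{\min}(CA^t)\epsilon-\sigma_{\max}(A^t)\epsilon L(\bar{x}_t)-2\Lambda(\mathcal{Y}_{\bar{x}_t})\}$, where $\sigma_{\min},\sigma_{\max}$ are the smallest and largest singular values and $\epsilon>0$ is a tolerance chosen large enough that this bound is positive. *)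

theory Defs
  imports "HOL-Analysis.Analysis"
begin

text \<open>Matrix power (the type real^'n^'n carries a componentwise multiplication,
  so the ordinary power operator would be the wrong notion).\<close>
fun matpow :: "real^'n^'n \<Rightarrow> nat \<Rightarrow> real^'n^'n" where
  "matpow A 0 = mat 1"
| "matpow A (Suc k) = A ** matpow A k"

definition eigenvalues :: "real^'n^'n \<Rightarrow> real set" where
  "eigenvalues M = {c. \<exists>v. v \<noteq> 0 \<and> M *v v = c *\<^sub>R v}"

definition lambda_max :: "real^'n^'n \<Rightarrow> real" where
  "lambda_max M = Max (eigenvalues M)"

definition lambda_min :: "real^'n^'n \<Rightarrow> real" where
  "lambda_min M = Min (eigenvalues M)"

definition sigma_max :: "real^'n^'m \<Rightarrow> real" where
  "sigma_max M = sqrt (lambda_max (transpose M ** M))"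

definition sigma_min :: "real^'n^'m \<Rightarrow> real" where
  "sigma_min M = sqrt (lambda_min (transpose M ** M))"

definition out_set :: "real^'n^'m \<Rightarrow> (real^'m \<Rightarrow> real^'m^'m) \<Rightarrow> real^'n \<Rightarrow> (real^'m) set" where
  "out_set C Q x = {y. (y - C *v x) \<bullet> (matrix_inv (Q (C *v x)) *v (y - C *v x)) \<le> 1}"

definition Lam :: "real^'n^'m \<Rightarrow> (real^'m \<Rightarrow> real^'m^'m) \<Rightarrow> real^'n \<Rightarrow> real" where
  "Lam C Q x = lambda_max (Q (C *v x))"

definition Mball :: "real^'n^'m \<Rightarrow> (real^'m \<Rightarrow> real^'m^'m) \<Rightarrow> real \<Rightarrow> real^'n \<Rightarrow> real" where
  "Mball C Q r xb = (SUP x\<in>cball xb r. Lam C Q x)"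

definition Lip :: "real^'n^'m \<Rightarrow> (real^'m \<Rightarrow> real^'m^'m) \<Rightarrow> real \<Rightarrow> real^'n \<Rightarrow> real" where
  "Lip C Q r xb = 2 * Mball C Q r xb / r"

definition set_dist :: "'a::metric_space set \<Rightarrow> 'a set \<Rightarrow> real" where
  "set_dist P R = (INF p\<in>P. INF q\<in>R. dist p q)"

fun traj :: "real^'n^'n \<Rightarrow> real^'k^'n \<Rightarrow> real^'n \<Rightarrow> (nat \<Rightarrow> real^'k) \<Rightarrow> nat \<Rightarrow> real^'n" where
  "traj A B x0 u 0 = x0"
| "traj A B x0 u (Suc t) = A *v traj A B x0 u t + B *v u t"

definition tube_dist ::
  "real^'n^'n \<Rightarrow> real^'k^'n \<Rightarrow> real^'n^'m \<Rightarrow> (real^'m \<Rightarrow> real^'m^'m) \<Rightarrow> nat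
     \<Rightarrow> (nat \<Rightarrow> real^'k) \<Rightarrow> real^'n \<Rightarrow> real^'n \<Rightarrow> real" where
  "tube_dist A B C Q T u xb0 x0 =
     (\<Sum>t\<le>T. set_dist (out_set C Q (traj A B xb0 u t)) (out_set C Q (traj A B x0 u t)))"

definition fh_weakly_observable ::
  "real^'n^'n \<Rightarrow> real^'k^'n \<Rightarrow> real^'n^'m \<Rightarrow> (real^'m \<Rightarrow> real^'m^'m) \<Rightarrow> (real^'k) set
     \<Rightarrow> real^'n \<Rightarrow> bool" where
  "fh_weakly_observable A B C Q U xb0 \<longleftrightarrow>
     (\<exists>T>0. \<exists>N. open N \<and> xb0 \<in> N \<and>
        (\<forall>x0\<in>N. \<forall>u. (\<forall>t. u t \<in> U) \<longrightarrow>
            (tube_dist A B C Q T u xb0 x0 > 0 \<longleftrightarrow> dist xb0 x0 > 0)))"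

definition observability_regular ::
  "real^'n^'n \<Rightarrow> real^'k^'n \<Rightarrow> real^'n^'m \<Rightarrow> (real^'m \<Rightarrow> real^'m^'m) \<Rightarrow> (real^'k) set
     \<Rightarrow> (real^'n) set \<Rightarrow> real^'n \<Rightarrow> bool" where
  "observability_regular A B C Q U S xb0 \<longleftrightarrow>
     convex_on S (Lam C Q) \<and> (\<exists>K. \<forall>x\<in>S. \<bar>Lam C Q x\<bar> \<le> K) \<and>
     fh_weakly_observable A B C Q U xb0"

definition DOl ::
  "real^'n^'n \<Rightarrow> real^'n^'m \<Rightarrow> (real^'m \<Rightarrow> real^'m^'m) \<Rightarrow> real \<Rightarrow> real \<Rightarrow> nat
     \<Rightarrow> (nat \<Rightarrow> real^'n) \<Rightarrow> real" where
  "DOl A C Q r \<epsilon> T xs =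
     (\<Sum>t\<le>T. sigma_min (C ** matpow A t) * \<epsilon>
             - sigma_max (matpow A t) * \<epsilon> * Lip C Q r (xs t)
             - 2 * Lam C Q (xs t))"

text \<open>Concavity of a functional of state sequences x_{0:T} (only the entries
  t \<le> T matter) on a set D of sequences; this is the definition of
  concave_on written out for the sequence space.\<close>
definition seq_concave_on :: "(nat \<Rightarrow> real^'n) set \<Rightarrow> ((nat \<Rightarrow> real^'n) \<Rightarrow> real) \<Rightarrow> bool" where
  "seq_concave_on D F \<longleftrightarrow>
     (\<forall>xs\<in>D. \<forall>ys\<in>D. \<forall>a\<ge>0. \<forall>b\<ge>0. a + b = 1 \<longrightarrow>
        (\<lambda>t. a *\<^sub>R xs t + b *\<^sub>R ys t) \<in> D \<and>
        a * F xs + b * F ys \<le> F (\<lambda>t. a *\<^sub>R xs t + b *\<^sub>R ys t))"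

end

theory Submission
  imports Defs
begin

text \<open>Every summand of the lower bound is a constant minus nonnegative multiples of
  \<Lambda> and of the local Lipschitz constant, so it suffices that both are convex
  in the centre. For \<Lambda> this is the hypothesis; for the Lipschitz constant it
  holds because every point of the ball around a convex combination of two centres is the
  same convex combination of points of the two balls, whence the supremum of a convex
  function over the ball is again convex in the centre. The only matrix fact needed is
  that the largest singular value is nonnegative, i.e. that the largest eigenvalue of a Gram
  matrix exists and is nonnegative.\<close>

lemma transpose_diff:
  "transpose (A - B) = transpose A - transpose (B::'a::ab_group_add^'n^'m)"
  by (simp add: transpose_def vec_eq_iff)

lemma inner_matrix_symmetric:
  fixes N :: "real^'n^'n"
  assumes "transpose N = N"
  shows "x \<bullet> (N *v y) = (N *v x) \<bullet> y"
  by (metis dot_lmul_matrix transpose_matrix_vector assms)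

lemma finite_eigenvalues_symmetric:
  fixes N :: "real^'n^'n"
  assumes sym: "transpose N = N"
  shows "finite (eigenvalues N)"
proof -
  define f where "f c = (SOME v. v \<noteq> 0 \<and> N *v v = c *\<^sub>R v)" for c
  have f: "f c \<noteq> 0 \<and> N *v f c = c *\<^sub>R f c" if "c \<in> eigenvalues N" for c
  proof -
    have "\<exists>v. v \<noteq> 0 \<and> N *v v = c *\<^sub>R v" using that by (simp add: eigenvalues_def)
    then show ?thesis unfolding f_def by (rule someI_ex)
  qed
  have inj: "inj_on f (eigenvalues N)"
  proof (rule inj_onI)
    fix c d assume c: "c \<in> eigenvalues N" and d: "d \<in> eigenvalues N" and "f c = f d"
    then have "c *\<^sub>R f c = d *\<^sub>R f c" using f[OF c] f[OF d] by metis
    then show "c = d" using f[OF c] by (simp add: scaleR_cancel_right)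
  qed
  have "pairwise orthogonal (f ` eigenvalues N)"
    unfolding pairwise_def orthogonal_def
  proof clarify
    fix c d assume c: "c \<in> eigenvalues N" and d: "d \<in> eigenvalues N" and "f c \<noteq> f d"
    then have "c \<noteq> d" by auto
    have "c * (f c \<bullet> f d) = (N *v f c) \<bullet> f d" using f[OF c] by simp
    also have "\<dots> = f c \<bullet> (N *v f d)" using inner_matrix_symmetric[OF sym] by simp
    also have "\<dots> = d * (f c \<bullet> f d)" using f[OF d] by simp
    finally show "f c \<bullet> f d = 0" using \<open>c \<noteq> d\<close> by simp
  qed
  moreover have "0 \<notin> f ` eigenvalues N" using f by auto
  ultimately have "independent (f ` eigenvalues N)"
    by (rule pairwise_orthogonal_independent)
  then have "finite (f ` eigenvalues N)" by (rule independent_bound[THEN conjunct1])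
  then show ?thesis using inj finite_imageD by blast
qed

lemma psd_quadratic_form_zero_imp_kernel:
  fixes P :: "real^'n^'n"
  assumes sym: "transpose P = P" and psd: "\<And>x. x \<bullet> (P *v x) \<ge> 0"
    and zero: "v \<bullet> (P *v v) = 0"
  shows "P *v v = 0"
proof (rule ccontr)
  define u where "u = P *v v"
  assume "P *v v \<noteq> 0"
  then have uu: "u \<bullet> u > 0" by (simp add: u_def)
  have vu: "v \<bullet> u = 0" and vPu: "v \<bullet> (P *v u) = u \<bullet> u"
    using zero inner_matrix_symmetric[OF sym, of v u] by (simp_all add: u_def)
  have expand: "(v - s *\<^sub>R u) \<bullet> (P *v (v - s *\<^sub>R u))
                  = s * (s * (u \<bullet> (P *v u)) - 2 * (u \<bullet> u))" for s
  proof -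
    have "P *v (v - s *\<^sub>R u) = u - s *\<^sub>R (P *v u)"
      by (simp add: u_def matrix_vector_mult_diff_distrib matrix_vector_mult_scaleR)
    then show ?thesis
      by (simp add: inner_diff_left inner_diff_right vu vPu inner_commute[of u v] algebra_simps)
  qed
  define s where "s = (u \<bullet> u) / (u \<bullet> (P *v u) + 1)"
  have "s > 0" and "s * (u \<bullet> (P *v u)) < u \<bullet> u"
    using uu psd[of u] by (simp_all add: s_def field_simps)
  then have "s * (s * (u \<bullet> (P *v u)) - 2 * (u \<bullet> u)) < 0"
    using uu by (intro mult_pos_neg) linarith+
  then show False using psd[of "v - s *\<^sub>R u"] by (simp add: expand)
qed

text \<open>A maximiser of the Rayleigh quotient on the unit sphere is an eigenvector.\<close>

lemma eigenvalues_symmetric_nonempty: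
  fixes N :: "real^'n^'n"
  assumes sym: "transpose N = N"
  shows "eigenvalues N \<noteq> {}"
proof -
  let ?q = "\<lambda>x. x \<bullet> (N *v x)"
  have "continuous_on (sphere 0 1) ?q"
    by (intro continuous_intros linear_continuous_on matrix_vector_mul_linear)
       (simp add: linear_conv_bounded_linear)
  moreover have "sphere (0::real^'n) 1 \<noteq> {}" by simp
  ultimately obtain v where v: "v \<in> sphere 0 1"
    and vmax: "\<And>y. y \<in> sphere 0 1 \<Longrightarrow> ?q y \<le> ?q v"
    using continuous_attains_sup[OF compact_sphere] by blast
  define P where "P = ?q v *\<^sub>R mat 1 - N"
  have Pq: "x \<bullet> (P *v x) = ?q v * (x \<bullet> x) - ?q x" for x
    by (simp add: P_def matrix_vector_mult_diff_rdistrib scaleR_matrix_vector_assoc[symmetric]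
        inner_diff_right)
  have "transpose P = P"
    by (simp add: P_def transpose_diff transpose_scalar transpose_mat sym)
  moreover have "x \<bullet> (P *v x) \<ge> 0" for x
  proof (cases "x = 0")
    case False
    define y where "y = (1 / norm x) *\<^sub>R x"
    have "y \<in> sphere 0 1" and xy: "x = norm x *\<^sub>R y" using False by (simp_all add: y_def)
    have "?q x = (norm x)\<^sup>2 * ?q y"
      by (subst (1 2) xy) (simp add: matrix_vector_mult_scaleR power2_eq_square)
    moreover have "x \<bullet> x = (norm x)\<^sup>2" by (simp add: power2_norm_eq_inner)
    ultimately have "x \<bullet> (P *v x) = (norm x)\<^sup>2 * (?q v - ?q y)"
      by (simp add: Pq algebra_simps)
    then show ?thesis using vmax[OF \<open>y \<in> sphere 0 1\<close>] by simp
  qed simp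
  moreover have "v \<bullet> (P *v v) = 0" using v by (simp add: Pq norm_eq_1)
  ultimately have "P *v v = 0" by (rule psd_quadratic_form_zero_imp_kernel)
  then have "N *v v = ?q v *\<^sub>R v"
    by (simp add: P_def matrix_vector_mult_diff_rdistrib scaleR_matrix_vector_assoc[symmetric])
  moreover have "v \<noteq> 0" using v by auto
  ultimately show ?thesis unfolding eigenvalues_def by blast
qed

lemma eigenvalues_gram_nonneg:
  fixes M :: "real^'n^'m"
  assumes "c \<in> eigenvalues (transpose M ** M)"
  shows "c \<ge> 0"
proof -
  obtain v where "v \<noteq> 0" and v: "(transpose M ** M) *v v = c *\<^sub>R v"
    using assms by (auto simp: eigenvalues_def)
  have "c * (v \<bullet> v) = v \<bullet> (transpose M *v (M *v v))"
    by (simp only: matrix_vector_mul_assoc v inner_scaleR_right)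
  also have "\<dots> = (M *v v) \<bullet> (M *v v)"
    by (simp only: dot_lmul_matrix[symmetric] vector_transpose_matrix)
  finally have "c * (v \<bullet> v) \<ge> 0" by simp
  moreover have "v \<bullet> v > 0" using \<open>v \<noteq> 0\<close> by simp
  ultimately show ?thesis by (simp add: zero_le_mult_iff)
qed

lemma sigma_max_nonneg:
  fixes M :: "real^'n^'m"
  shows "sigma_max M \<ge> 0"
proof -
  let ?N = "transpose M ** M"
  have sym: "transpose ?N = ?N" by (simp only: matrix_transpose_mul transpose_transpose)
  obtain c where c: "c \<in> eigenvalues ?N" using eigenvalues_symmetric_nonempty[OF sym] by blast
  then have "c \<le> lambda_max ?N"
    unfolding lambda_max_def using finite_eigenvalues_symmetric[OF sym] by simp
  then show ?thesis
    using eigenvalues_gram_nonneg[OF c] unfolding sigma_max_def by simp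
qed

lemma cball_convex_combination_decompose:
  fixes x y z :: "'a::real_normed_vector"
  assumes "z \<in> cball (a *\<^sub>R x + b *\<^sub>R y) r" and "a + b = 1"
  obtains d where "norm d \<le> r" and "z = a *\<^sub>R (x + d) + b *\<^sub>R (y + d)"
proof
  let ?d = "z - (a *\<^sub>R x + b *\<^sub>R y)"
  show "norm ?d \<le> r" using assms(1) by (simp add: dist_norm norm_minus_commute)
  have "a *\<^sub>R (x + ?d) + b *\<^sub>R (y + ?d) = a *\<^sub>R x + b *\<^sub>R y + (a + b) *\<^sub>R ?d"
    by (simp add: algebra_simps)
  then show "z = a *\<^sub>R (x + ?d) + b *\<^sub>R (y + ?d)" using assms(2) by simp
qed

lemma cball_convex_combination_subset:
  fixes x y :: "'a::real_normed_vector"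
  assumes "convex S" and "cball x r \<subseteq> S" and "cball y r \<subseteq> S"
    and "a \<ge> 0" and "b \<ge> 0" and "a + b = 1"
  shows "cball (a *\<^sub>R x + b *\<^sub>R y) r \<subseteq> S"
proof
  fix z assume "z \<in> cball (a *\<^sub>R x + b *\<^sub>R y) r"
  then obtain d where "norm d \<le> r" and z: "z = a *\<^sub>R (x + d) + b *\<^sub>R (y + d)"
    using assms(6) by (rule cball_convex_combination_decompose)
  then have "x + d \<in> S" and "y + d \<in> S"
    using assms(2,3) by (auto simp: dist_norm subset_iff)
  then show "z \<in> S" unfolding z using assms(1,4-6) by (simp add: convexD)
qed

lemma convex_on_cball_SUP:
  fixes f :: "'a::real_normed_vector \<Rightarrow> real"
  assumes cf: "convex_on S f" and bounded: "\<forall>x\<in>S. \<bar>f x\<bar> \<le> K" and "r \<ge> 0"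
    and x: "cball x r \<subseteq> S" and y: "cball y r \<subseteq> S"
    and "a \<ge> 0" and "b \<ge> 0" and "a + b = 1"
  shows "(SUP z\<in>cball (a *\<^sub>R x + b *\<^sub>R y) r. f z)
           \<le> a * (SUP z\<in>cball x r. f z) + b * (SUP z\<in>cball y r. f z)"
proof (rule cSUP_least)
  show "cball (a *\<^sub>R x + b *\<^sub>R y) r \<noteq> {}" using \<open>r \<ge> 0\<close> by simp
  have bdd: "bdd_above (f ` cball w r)" if "cball w r \<subseteq> S" for w
    using that bounded by (intro bdd_aboveI2[where M=K]) force
  fix z assume "z \<in> cball (a *\<^sub>R x + b *\<^sub>R y) r"
  then obtain d where "norm d \<le> r" and z: "z = a *\<^sub>R (x + d) + b *\<^sub>R (y + d)"
    using \<open>a + b = 1\<close> by (rule cball_convex_combination_decompose)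
  then have xd: "x + d \<in> cball x r" and yd: "y + d \<in> cball y r" by (simp_all add: dist_norm)
  moreover have "x + d \<in> S" and "y + d \<in> S" using xd yd x y by auto
  ultimately have "f z \<le> a * f (x + d) + b * f (y + d)"
    unfolding z using cf assms(6-8) by (simp add: convex_on_def)
  also have "\<dots> \<le> a * (SUP z\<in>cball x r. f z) + b * (SUP z\<in>cball y r. f z)"
    using cSUP_upper[OF xd bdd[OF x]] cSUP_upper[OF yd bdd[OF y]] assms(6,7)
    by (intro add_mono mult_left_mono) auto
  finally show "f z \<le> a * (SUP z\<in>cball x r. f z) + b * (SUP z\<in>cball y r. f z)" .
qed

lemma Lip_convex_combination:
  assumes "convex_on S (Lam C Q)" and "\<forall>x\<in>S. \<bar>Lam C Q x\<bar> \<le> K" and "r > 0"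
    and "cball x r \<subseteq> S" and "cball y r \<subseteq> S"
    and "a \<ge> 0" and "b \<ge> 0" and "a + b = 1"
  shows "Lip C Q r (a *\<^sub>R x + b *\<^sub>R y) \<le> a * Lip C Q r x + b * Lip C Q r y"
proof -
  have "Mball C Q r (a *\<^sub>R x + b *\<^sub>R y) \<le> a * Mball C Q r x + b * Mball C Q r y"
    unfolding Mball_def using assms by (intro convex_on_cball_SUP) auto
  then have "2 * Mball C Q r (a *\<^sub>R x + b *\<^sub>R y) / r
               \<le> 2 * (a * Mball C Q r x + b * Mball C Q r y) / r"
    using \<open>r > 0\<close> by (intro divide_right_mono) auto
  then show ?thesis by (simp add: Lip_def add_divide_distrib mult.left_commute)
qed

lemma concave_combination_const_minus:
  fixes s L L1 L2 l l1 l2 c a b :: real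
  assumes "s \<ge> 0" and "L \<le> a * L1 + b * L2" and "l \<le> a * l1 + b * l2" and "a + b = 1"
  shows "a * (c - s * L1 - 2 * l1) + b * (c - s * L2 - 2 * l2) \<le> c - s * L - 2 * l"
proof -
  have "s * L \<le> s * (a * L1 + b * L2)" using assms(2,1) by (rule mult_left_mono)
  moreover have "c = a * c + b * c" using assms(4) by (metis distrib_right mult_1)
  ultimately show ?thesis using assms(3) by (simp add: algebra_simps)
qed

lemma DOl_concave_combination:
  assumes cvx: "convex_on S (Lam C Q)" and K: "\<forall>x\<in>S. \<bar>Lam C Q x\<bar> \<le> K"
    and "r > 0" and "\<epsilon> > 0"
    and balls: "\<And>t. t \<le> T \<Longrightarrow> cball (xs t) r \<subseteq> S"
      "\<And>t. t \<le> T \<Longrightarrow> cball (ys t) r \<subseteq> S"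
    and ab: "a \<ge> 0" "b \<ge> 0" "a + b = 1"
  shows "a * DOl A C Q r \<epsilon> T xs + b * DOl A C Q r \<epsilon> T ys
           \<le> DOl A C Q r \<epsilon> T (\<lambda>t. a *\<^sub>R xs t + b *\<^sub>R ys t)"
proof -
  have "a * (sigma_min (C ** matpow A t) * \<epsilon> - sigma_max (matpow A t) * \<epsilon> * Lip C Q r (xs t)
            - 2 * Lam C Q (xs t))
        + b * (sigma_min (C ** matpow A t) * \<epsilon> - sigma_max (matpow A t) * \<epsilon> * Lip C Q r (ys t)
            - 2 * Lam C Q (ys t))
      \<le> sigma_min (C ** matpow A t) * \<epsilon>
          - sigma_max (matpow A t) * \<epsilon> * Lip C Q r (a *\<^sub>R xs t + b *\<^sub>R ys t)
          - 2 * Lam C Q (a *\<^sub>R xs t + b *\<^sub>R ys t)" if "t \<le> T" for t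
  proof (rule concave_combination_const_minus)
    show "sigma_max (matpow A t) * \<epsilon> \<ge> 0"
      using sigma_max_nonneg[of "matpow A t"] \<open>\<epsilon> > 0\<close> by simp
    show "Lip C Q r (a *\<^sub>R xs t + b *\<^sub>R ys t) \<le> a * Lip C Q r (xs t) + b * Lip C Q r (ys t)"
      using balls[OF that] ab by (intro Lip_convex_combination[OF cvx K \<open>r > 0\<close>])
    have "xs t \<in> S" "ys t \<in> S" using balls[OF that] \<open>r > 0\<close> by auto
    then show "Lam C Q (a *\<^sub>R xs t + b *\<^sub>R ys t) \<le> a * Lam C Q (xs t) + b * Lam C Q (ys t)"
      using cvx ab by (simp add: convex_on_def)
  qed (fact ab)
  then show ?thesis
    unfolding DOl_def sum_distrib_left sum.distrib[symmetric] by (intro sum_mono) simp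
qed

theorem theorem1:
  fixes A :: "real^'n^'n" and B :: "real^'k^'n" and C :: "real^'n^'m"
    and Q :: "real^'m \<Rightarrow> real^'m^'m" and U :: "(real^'k) set" and S :: "(real^'n) set"
    and xb0 :: "real^'n" and r \<epsilon> :: real and T :: nat
  assumes "observability_regular A B C Q U S xb0"
    and "\<And>x. transpose (Q (C *v x)) = Q (C *v x)"
    and "\<And>x v. v \<noteq> 0 \<Longrightarrow> v \<bullet> (Q (C *v x) *v v) > 0"
    and "r > 0" and "\<epsilon> > 0"
  shows "seq_concave_on {xs. \<forall>t\<le>T. cball (xs t) r \<subseteq> S} (DOl A C Q r \<epsilon> T)"
proof -
  obtain K where cvx: "convex_on S (Lam C Q)" and K: "\<forall>x\<in>S. \<bar>Lam C Q x\<bar> \<le> K"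
    using assms(1) by (auto simp: observability_regular_def)
  have "convex S" using cvx by (simp add: convex_on_def)
  show ?thesis unfolding seq_concave_on_def
  proof (intro ballI allI impI conjI)
    fix xs ys :: "nat \<Rightarrow> real^'n" and a b :: real
    assume "xs \<in> {xs. \<forall>t\<le>T. cball (xs t) r \<subseteq> S}" "ys \<in> {xs. \<forall>t\<le>T. cball (xs t) r \<subseteq> S}"
      and ab: "a \<ge> 0" "b \<ge> 0" "a + b = 1"
    then have balls: "cball (xs t) r \<subseteq> S" "cball (ys t) r \<subseteq> S" if "t \<le> T" for t
      using that by auto
    show "(\<lambda>t. a *\<^sub>R xs t + b *\<^sub>R ys t) \<in> {xs. \<forall>t\<le>T. cball (xs t) r \<subseteq> S}"
      using cball_convex_combination_subset[OF \<open>convex S\<close> balls(1) balls(2) ab] by simp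
    show "a * DOl A C Q r \<epsilon> T xs + b * DOl A C Q r \<epsilon> T ys
          \<le> DOl A C Q r \<epsilon> T (\<lambda>t. a *\<^sub>R xs t + b *\<^sub>R ys t)"
      using DOl_concave_combination[OF cvx K \<open>r > 0\<close> \<open>\<epsilon> > 0\<close> balls ab] .
  qed
qed

end
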